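(* Let $\Lambda$ be an operator that satisfies balanced treatment and non-arbitrariness. Then $\Lambda$ satisfies present boundedness.
   Context: Agents are elements of $\mathbb{N}$; $N$ denotes a nonempty finite subset of $\mathbb{N}$. A (standard) claims problem is a triple $(N,c,E)$ with $c\in\mathbb{R}_+^N$, $E\in\mathbb{R}_+$, $C=\sum_{i\in N}c_i>0$ and $E\le C$. An allocation for it is $x\in\mathbb{R}^N$ with $0\le x_i\le c_i$ for all $i$ and $\sum_ix_i=E$. A standard rule $R$ assigns to each standard claims problem an allocation $R(N,c,E)$; $\mathcal{R}$ is the set of standard rules. A history for $N$ is a finite sequence $h=\{(c^{(t)},x^{(t)})\}_{t=1}^{|T|}$ where for each $t$, $c^{(t)}\in\mathbb{R}_+^N$ and $x^{(t)}$ is an allocation of $(N,c^{(t)},\sum_ix^{(t)}_i)$. A historical claims problem is $(N,c,E,h)$ with $(N,c,E)$ a standard claims problem and $h$ a history for $N$; its allocations are the allocations of $(N,c,E)$. A general rule assigns to each historical claims problem an allocation. An operator $\Lambda$ assigns to each standard rule $R$ a general rule $\Lambda(R)$. The history-adjusted claims are $\widetilde{c}_i=c_i+\sum_t(c^{(t)}_i-x^{(t)}_i)$. Axioms on operators (required for every $R\in\mathcal{R}$ and every historical problem $(N,c,E,h)$): Present boundedness: for each $i\in N$, if $R_i(N,\widetilde{c},E)\ge c_i$ then $\Lambda_i(R)(N,c,E,h)=c_i$. Balanced treatment: for each $i,j\in N$ with $\Lambda_i(R)(N,c,E,h)<c_i$ and $\Lambda_j(R)(N,c,E,h)<c_j$,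 $\Lambda_i(R)(N,c,E,h)-R_i(N,\widetilde{c},E)=\Lambda_j(R)(N,c,E,h)-R_j(N,\widetilde{c},E)$. Non-arbitrariness: for each $i\in N$ with $\Lambda_i(R)(N,c,E,h)=c_i$ and $R_i(N,\widetilde{c},E)<c_i$, we have $\Lambda_i(R)(N,c,E,h)-R_i(N,\widetilde{c},E)\le\Lambda_j(R)(N,c,E,h)-R_j(N,\widetilde{c},E)$ for all $j\in N$ with $\Lambda_j(R)(N,c,E,h)<c_j$. *)

theory Defs
  imports Complex_Main
begin

(* Agents are natural numbers; vectors in R^N are represented as functions nat => real,
   whose values outside N are irrelevant. *)

type_synonym vec = "nat \<Rightarrow> real"
type_synonym history = "(vec \<times> vec) list"

definition claims_problem :: "nat set \<Rightarrow> vec \<Rightarrow> real \<Rightarrow> bool" where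
  "claims_problem N c E \<longleftrightarrow> finite N \<and> N \<noteq> {} \<and> (\<forall>i\<in>N. 0 \<le> c i) \<and> 0 \<le> E
     \<and> (\<Sum>i\<in>N. c i) > 0 \<and> E \<le> (\<Sum>i\<in>N. c i)"

definition is_allocation :: "nat set \<Rightarrow> vec \<Rightarrow> real \<Rightarrow> vec \<Rightarrow> bool" where
  "is_allocation N c E x \<longleftrightarrow> (\<forall>i\<in>N. 0 \<le> x i \<and> x i \<le> c i) \<and> (\<Sum>i\<in>N. x i) = E"

definition standard_rule :: "(nat set \<Rightarrow> vec \<Rightarrow> real \<Rightarrow> vec) \<Rightarrow> bool" where
  "standard_rule R \<longleftrightarrow> (\<forall>N c E. claims_problem N c E \<longrightarrow> is_allocation N c E (R N c E))"

definition is_history :: "nat set \<Rightarrow> history \<Rightarrow> bool" where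
  "is_history N h \<longleftrightarrow> (\<forall>(ct, xt) \<in> set h.
      claims_problem N ct (\<Sum>i\<in>N. xt i) \<and> is_allocation N ct (\<Sum>i\<in>N. xt i) xt)"

definition hist_problem :: "nat set \<Rightarrow> vec \<Rightarrow> real \<Rightarrow> history \<Rightarrow> bool" where
  "hist_problem N c E h \<longleftrightarrow> claims_problem N c E \<and> is_history N h"

definition general_rule :: "(nat set \<Rightarrow> vec \<Rightarrow> real \<Rightarrow> history \<Rightarrow> vec) \<Rightarrow> bool" where
  "general_rule G \<longleftrightarrow> (\<forall>N c E h. hist_problem N c E h \<longrightarrow> is_allocation N c E (G N c E h))"

type_synonym operator =
  "(nat set \<Rightarrow> vec \<Rightarrow> real \<Rightarrow> vec) \<Rightarrow> (nat set \<Rightarrow> vec \<Rightarrow> real \<Rightarrow> history \<Rightarrow> vec)"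

definition is_operator :: "operator \<Rightarrow> bool" where
  "is_operator L \<longleftrightarrow> (\<forall>R. standard_rule R \<longrightarrow> general_rule (L R))"

definition adj_claims :: "vec \<Rightarrow> history \<Rightarrow> vec" where
  "adj_claims c h = (\<lambda>i. c i + (\<Sum>(ct, xt) \<leftarrow> h. ct i - xt i))"

definition present_boundedness :: "operator \<Rightarrow> bool" where
  "present_boundedness L \<longleftrightarrow> (\<forall>R N c E h. standard_rule R \<longrightarrow> hist_problem N c E h \<longrightarrow>
     (\<forall>i\<in>N. R N (adj_claims c h) E i \<ge> c i \<longrightarrow> L R N c E h i = c i))"

definition balanced_treatment :: "operator \<Rightarrow> bool" where
  "balanced_treatment L \<longleftrightarrow> (\<forall>R N c E h. standard_rule R \<longrightarrow> hist_problem N c E h \<longrightarrow>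
     (\<forall>i\<in>N. \<forall>j\<in>N. L R N c E h i < c i \<longrightarrow> L R N c E h j < c j \<longrightarrow>
        L R N c E h i - R N (adj_claims c h) E i = L R N c E h j - R N (adj_claims c h) E j))"

definition non_arbitrariness :: "operator \<Rightarrow> bool" where
  "non_arbitrariness L \<longleftrightarrow> (\<forall>R N c E h. standard_rule R \<longrightarrow> hist_problem N c E h \<longrightarrow>
     (\<forall>i\<in>N. L R N c E h i = c i \<longrightarrow> R N (adj_claims c h) E i < c i \<longrightarrow>
        (\<forall>j\<in>N. L R N c E h j < c j \<longrightarrow>
           L R N c E h i - R N (adj_claims c h) E i \<le> L R N c E h j - R N (adj_claims c h) E j)))"

end

theory Submission
  imports Defs
begin

(* Let x = L(R)(N,c,E,h) and r = R(N, adj_claims c h, E). If x_i < c_i <= r_i for some agent i, then balanced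
   treatment and non-arbitrariness give x_j - r_j <= max 0 (x_i - r_i) = 0 for every agent j, with
   strict inequality at i. Since the adjusted claims dominate c, r is again an allocation of E,
   so x and r have the same total: a contradiction. *)

lemma adj_claims_ge:
  assumes "is_history N h" and "i \<in> N"
  shows "c i \<le> adj_claims c h i"
proof -
  have "0 \<le> ct i - xt i" if "(ct, xt) \<in> set h" for ct xt
  proof -
    have "is_allocation N ct (\<Sum>i\<in>N. xt i) xt"
      using assms(1) that unfolding is_history_def by fastforce
    then show ?thesis using assms(2) unfolding is_allocation_def by auto
  qed
  then have "0 \<le> (\<Sum>(ct, xt) \<leftarrow> h. ct i - xt i)"
    by (intro sum_list_nonneg) auto
  then show ?thesis unfolding adj_claims_def by simp
qed

lemma claims_problem_adj_claims:
  assumes "hist_problem N c E h"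
  shows "claims_problem N (adj_claims c h) E"
proof -
  have cp: "claims_problem N c E" and hist: "is_history N h"
    using assms unfolding hist_problem_def by auto
  have le: "c j \<le> adj_claims c h j" if "j \<in> N" for j
    using adj_claims_ge[OF hist that] .
  then have "(\<Sum>j\<in>N. c j) \<le> (\<Sum>j\<in>N. adj_claims c h j)"
    by (rule sum_mono)
  then show ?thesis
    using cp le unfolding claims_problem_def by (auto intro: order_trans)
qed

lemma le_rule_if_rationed_agent_loses:
  fixes L :: operator and R :: "nat set \<Rightarrow> vec \<Rightarrow> real \<Rightarrow> vec"
    and N :: "nat set" and c :: vec and E :: real and h :: history
  defines "x \<equiv> L R N c E h" and "r \<equiv> R N (adj_claims c h) E"
  assumes bt: "balanced_treatment L" and na: "non_arbitrariness L"
    and R: "standard_rule R" and hp: "hist_problem N c E h"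
    and alloc: "is_allocation N c E x"
    and i: "i \<in> N" "x i < c i" "x i < r i" and j: "j \<in> N"
  shows "x j \<le> r j"
proof (cases "x j < c j")
  case True
  then have "x j - r j = x i - r i"
    using bt R hp i j unfolding balanced_treatment_def x_def r_def by metis
  then show ?thesis using i by simp
next
  case False
  then have xj: "x j = c j" using alloc j unfolding is_allocation_def by force
  show ?thesis
  proof (cases "r j < c j")
    case True
    then have "x j - r j \<le> x i - r i"
      using na R hp i j xj unfolding non_arbitrariness_def x_def r_def by metis
    then show ?thesis using i by simp
  next
    case False
    then show ?thesis using xj by simp
  qed
qed

theorem lemma1:
  fixes L :: operator
  assumes "is_operator L"
    and "balanced_treatment L"
    and "non_arbitrariness L"
  shows "present_boundedness L"
  unfolding present_boundedness_def
proof (intro allI impI ballI)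
  fix R N c E h i
  assume R: "standard_rule R" and hp: "hist_problem N c E h" and i: "i \<in> N"
    and bound: "c i \<le> R N (adj_claims c h) E i"
  define x where "x = L R N c E h"
  define r where "r = R N (adj_claims c h) E"
  have x_alloc: "is_allocation N c E x"
    using assms(1) R hp unfolding x_def is_operator_def general_rule_def by blast
  have r_alloc: "is_allocation N (adj_claims c h) E r"
    using R claims_problem_adj_claims[OF hp] unfolding r_def standard_rule_def by blast
  have "finite N" using hp unfolding hist_problem_def claims_problem_def by auto
  show "L R N c E h i = c i"
  proof (rule ccontr)
    assume "L R N c E h i \<noteq> c i"
    then have "x i < c i" using x_alloc i unfolding x_def is_allocation_def by force
    with bound have "x i < r i" unfolding r_def by simp
    have "x j \<le> r j" if "j \<in> N" for j
      using le_rule_if_rationed_agent_loses[OF assms(2,3) R hp] x_alloc i \<open>x i < c i\<close>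
        \<open>x i < r i\<close> that unfolding x_def r_def by blast
    then have "(\<Sum>j\<in>N. x j) < (\<Sum>j\<in>N. r j)"
      using \<open>finite N\<close> i \<open>x i < r i\<close> by (blast intro: sum_strict_mono_ex1)
    then show False using x_alloc r_alloc unfolding is_allocation_def by simp
  qed
qed

end
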